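(* Let $n\ge 1$, $h=1/(2n)$. Consider a fine grid on $\Omega^f=[0,1]\times[0,1]$ with points $((i-1)h,(j-1)h)$, $i=1,\dots,2n$ (periodic in $x$), where row $j=1$ lies on the interface $\Gamma=\{y=0\}$ (no ghost points are used on the fine side); and a coarse grid on $\Omega^c=[0,1]\times[-1,0]$ with points $(2(i-1)h,2(j-n)h)$, $i=1,\dots,n$ (periodic in $x$), where row $j=n$ lies on $\Gamma$ and $j=n+1$ is a row of ghost points. Let $(\boldsymbol u,\boldsymbol v)_h=h^2\sum_i\sum_j w^f_ju_{ij}v_{ij}$ and $(\boldsymbol u,\boldsymbol v)_{2h}=(2h)^2\sum_i\sum_j w^c_ju_{ij}v_{ij}$ be weighted inner products on the fine and coarse grids (weights positive; $w_1:=w^f_1$ is the weight of the interface row of the fine grid), and let $\langle\boldsymbol u_\Gamma,\boldsymbol v_\Gamma\rangle_h=h\sum_{i=1}^{2n}u_iv_i$, $\langle\boldsymbol u_\Gamma,\boldsymbol v_\Gamma\rangle_{2h}=2h\sum_{i=1}^n u_iv_i$. For a grid function $\boldsymbol u$, $\boldsymbol u_\Gamma$ (also written $\boldsymbol u|_\Gamma$) is its restriction to the interface row. Assume a linear operator $G_f(\mu)$ on fine grid functions (no ghost points) with a linear map $\boldsymbol v\mapsto\boldsymbol v'_\Gamma\in\mathbb R^{2n}$ such that $(\boldsymbol u,G_f(\mu)\boldsymbol v)_h=-S_f(\boldsymbol u,\boldsymbol v)-\langle\boldsymbol u_\Gamma,\boldsymbol v'_\Gamma\rangle_h$ for all $\boldsymbol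 u,\boldsymbol v$, and a linear operator $\widetilde G_c(\mu)$ on coarse grid functions with ghost points with a linear map $\widetilde{\boldsymbol v}\mapsto\widetilde{\boldsymbol v}'_\Gamma\in\mathbb R^n$ such that $(\boldsymbol u,\widetilde G_c(\mu)\widetilde{\boldsymbol v})_{2h}=-S_c(\boldsymbol u,\boldsymbol v)+\langle\boldsymbol u_\Gamma,\widetilde{\boldsymbol v}'_\Gamma\rangle_{2h}$ for all $\boldsymbol u,\widetilde{\boldsymbol v}$, where $S_f,S_c$ are symmetric positive semi-definite bilinear forms. Let $\boldsymbol\rho^f,\boldsymbol\rho^c$ be diagonal matrices with positive diagonal entries, and let $\mathcal P:\mathbb R^n\to\mathbb R^{2n}$ and $\mathcal R:\mathbb R^{2n}\to\mathbb R^n$ be linear maps with $\mathcal P=2\mathcal R^T$. Consider smooth time-dependent grid functions $\boldsymbol f(t)$ (fine) and $\widetilde{\boldsymbol c}(t)$ (coarse, with ghost points) satisfying, for all $t$: $\boldsymbol\rho^c\boldsymbol c_{tt}=\widetilde G_c(\mu)\widetilde{\boldsymbol c}$; $\boldsymbol f_{:,1}=\mathcal P(\boldsymbol c_{:,n})$; $(\boldsymbol\rho^f\boldsymbol f_{tt})_{:,1}=(G_f(\mu)\boldsymbol f)_{:,1}+\boldsymbol\eta$ and $(\boldsymbol\rho^f\boldsymbol f_{tt})_{:,j}=(G_f(\mu)\boldsymbol f)_{:,j}$ for $j\ge2$, where $\boldsymbol\eta=\boldsymbol\rho^f|_\Gamma\,\mathcal P\big((\boldsymbol\rho^c)^{-1}\widetilde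 G_c(\mu)\widetilde{\boldsymbol c}|_\Gamma\big)-G_f(\mu)\boldsymbol f|_\Gamma$; and $\widetilde{\boldsymbol c}'_\Gamma=\mathcal R\big(\boldsymbol f'_\Gamma-hw_1\boldsymbol\eta\big)$. Then $\frac{d}{dt}\left[(\boldsymbol f_t,\boldsymbol\rho^f\boldsymbol f_t)_h+S_f(\boldsymbol f,\boldsymbol f)+(\boldsymbol c_t,\boldsymbol\rho^c\boldsymbol c_t)_{2h}+S_c(\boldsymbol c,\boldsymbol c)\right]=0.$
   Context: This is the "improved SBP-GP" semi-discretization of the two-dimensional acoustic wave equation $\rho u_{tt}=\nabla\cdot(\mu\nabla u)$ across a 1:2 mesh refinement interface at $y=0$, with continuity of solution and normal flux imposed using only ghost points on the coarse side; periodic in $x$, and contributions from the outer boundaries are not included (as encoded in the assumed summation-by-parts identities). $\boldsymbol c$ denotes the restriction of $\widetilde{\boldsymbol c}$ to non-ghost points; colon notation $\boldsymbol f_{:,j}$ means the $j$-th row (all $i$); $\boldsymbol\rho^f|_\Gamma$ is the diagonal matrix of $\boldsymbol\rho^f$-entries on the interface row. In the paper $\boldsymbol v'_\Gamma$ has entries $\mu_{i,1}\boldsymbol b_1^T\boldsymbol v_{i,:}$, a boundary approximation of $\mu\,\partial_y v$. *)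

theory Defs
  imports Complex_Main
begin

text \<open>Grid functions are indexed by pairs (i,j) (i = x-index, j = y-index).
Fine grid: i = 1..2n, j = 1..2n+1 (row j = 1 is the interface).
Coarse grid: i = 1..n, j = 0..n (row j = n is the interface), ghost row j = n+1.\<close>

type_synonym gridfun = "nat \<times> nat \<Rightarrow> real"

definition hh :: "nat \<Rightarrow> real" where
  "hh n = 1 / (2 * real n)"

definition fine_pts :: "nat \<Rightarrow> (nat \<times> nat) set" where
  "fine_pts n = {1..2*n} \<times> {1..2*n+1}"

definition coarse_pts :: "nat \<Rightarrow> (nat \<times> nat) set" where
  "coarse_pts n = {1..n} \<times> {0..n}"

definition coarse_ghost_pts :: "nat \<Rightarrow> (nat \<times> nat) set" where
  "coarse_ghost_pts n = {1..n} \<times> {0..n+1}"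

definition ip_fine :: "nat \<Rightarrow> (nat \<Rightarrow> real) \<Rightarrow> gridfun \<Rightarrow> gridfun \<Rightarrow> real" where
  "ip_fine n w u v = (hh n)^2 * (\<Sum>i=1..2*n. \<Sum>j=1..2*n+1. w j * u (i,j) * v (i,j))"

definition ip_coarse :: "nat \<Rightarrow> (nat \<Rightarrow> real) \<Rightarrow> gridfun \<Rightarrow> gridfun \<Rightarrow> real" where
  "ip_coarse n w u v = (2 * hh n)^2 * (\<Sum>i=1..n. \<Sum>j=0..n. w j * u (i,j) * v (i,j))"

definition bip_fine :: "nat \<Rightarrow> (nat \<Rightarrow> real) \<Rightarrow> (nat \<Rightarrow> real) \<Rightarrow> real" where
  "bip_fine n a b = hh n * (\<Sum>i=1..2*n. a i * b i)"

definition bip_coarse :: "nat \<Rightarrow> (nat \<Rightarrow> real) \<Rightarrow> (nat \<Rightarrow> real) \<Rightarrow> real" where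
  "bip_coarse n a b = 2 * hh n * (\<Sum>i=1..n. a i * b i)"

definition row :: "gridfun \<Rightarrow> nat \<Rightarrow> nat \<Rightarrow> real" where
  "row u r = (\<lambda>i. u (i, r))"

definition linear_on :: "'a set \<Rightarrow> 'b set \<Rightarrow> (('a \<Rightarrow> real) \<Rightarrow> ('b \<Rightarrow> real)) \<Rightarrow> bool" where
  "linear_on D D' G \<longleftrightarrow>
     (\<forall>u v a b. \<forall>p\<in>D'. G (\<lambda>q. a * u q + b * v q) p = a * G u p + b * G v p) \<and>
     (\<forall>u v. (\<forall>q\<in>D. u q = v q) \<longrightarrow> (\<forall>p\<in>D'. G u p = G v p))"

definition sym_psd_form :: "'a set \<Rightarrow> (('a \<Rightarrow> real) \<Rightarrow> ('a \<Rightarrow> real) \<Rightarrow> real) \<Rightarrow> bool" where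
  "sym_psd_form D S \<longleftrightarrow>
     (\<forall>u u' v v'. (\<forall>q\<in>D. u q = u' q \<and> v q = v' q) \<longrightarrow> S u v = S u' v') \<and>
     (\<forall>u u' v a b. S (\<lambda>q. a * u q + b * u' q) v = a * S u v + b * S u' v) \<and>
     (\<forall>u v. S u v = S v u) \<and>
     (\<forall>u. 0 \<le> S u u)"

text \<open>Prolongation P : R^n -> R^{2n} and restriction R : R^{2n} -> R^n, given by matrices
Pm (2n x n, entries Pm (i,k)) and Rm (n x 2n, entries Rm (k,i)).\<close>
definition prolong :: "nat \<Rightarrow> (nat \<times> nat \<Rightarrow> real) \<Rightarrow> (nat \<Rightarrow> real) \<Rightarrow> nat \<Rightarrow> real" where
  "prolong n Pm a = (\<lambda>i. \<Sum>k=1..n. Pm (i,k) * a k)"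

definition restr :: "nat \<Rightarrow> (nat \<times> nat \<Rightarrow> real) \<Rightarrow> (nat \<Rightarrow> real) \<Rightarrow> nat \<Rightarrow> real" where
  "restr n Rm b = (\<lambda>k. \<Sum>i=1..2*n. Rm (k,i) * b i)"

end

theory Submission
  imports Defs
begin

text \<open>Differentiating the energy gives twice
  \<open>(f\<^sub>t, \<rho>\<^sup>f f\<^sub>t\<^sub>t)\<^sub>h + S\<^sub>f(f\<^sub>t, f) + (c\<^sub>t, \<rho>\<^sup>c c\<^sub>t\<^sub>t)\<^sub>2\<^sub>h + S\<^sub>c(c\<^sub>t, c)\<close>.
  Inserting the equations of motion and the two summation-by-parts identities cancels the
  forms \<open>S\<^sub>f, S\<^sub>c\<close>; what remains are the interface terms. The forcing \<open>\<eta>\<close> on the fine interface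
  row contributes \<open>\<langle>f\<^sub>t|\<^sub>\<Gamma>, h w\<^sub>1 \<eta>\<rangle>\<^sub>h\<close>, the fine flux \<open>-\<langle>f\<^sub>t|\<^sub>\<Gamma>, f'\<^sub>\<Gamma>\<rangle>\<^sub>h\<close>, and the coarse flux
  \<open>\<langle>c\<^sub>t|\<^sub>\<Gamma>, \<R>(f'\<^sub>\<Gamma> - h w\<^sub>1 \<eta>)\<rangle>\<^sub>2\<^sub>h\<close>. Since \<open>\<P> = 2\<R>\<^sup>T\<close> makes \<open>\<P>\<close> the adjoint of \<open>\<R>\<close> between
  the two interface inner products, and \<open>f\<^sub>t|\<^sub>\<Gamma> = \<P> c\<^sub>t|\<^sub>\<Gamma>\<close> by differentiating the continuity
  condition, the last term equals \<open>\<langle>f\<^sub>t|\<^sub>\<Gamma>, f'\<^sub>\<Gamma> - h w\<^sub>1 \<eta>\<rangle>\<^sub>h\<close> and the three cancel.\<close>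

lemma sym_psd_form_sum_left:
  assumes S: "sym_psd_form D S" and A: "finite A"
  shows "S (\<lambda>q. \<Sum>p\<in>A. a p * g p q) v = (\<Sum>p\<in>A. a p * S (g p) v)"
proof -
  have lin: "\<And>u u' a b. S (\<lambda>q. a * u q + b * u' q) v = a * S u v + b * S u' v"
    using S unfolding sym_psd_form_def by blast
  show ?thesis
    using A
  proof (induction A rule: finite_induct)
    case empty
    have "S (\<lambda>q. 0 * v q + 0 * v q) v = 0 * S v v + 0 * S v v" by (rule lin)
    then show ?case by simp
  next
    case (insert x F)
    have "S (\<lambda>q. a x * g x q + 1 * (\<Sum>p\<in>F. a p * g p q)) v
        = a x * S (g x) v + 1 * S (\<lambda>q. \<Sum>p\<in>F. a p * g p q) v"
      by (rule lin)
    then show ?case using insert by simp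
  qed
qed

lemma sym_psd_form_expand_left:
  assumes S: "sym_psd_form D S" and D: "finite D"
  shows "S u v = (\<Sum>p\<in>D. u p * S (\<lambda>q. of_bool (q = p)) v)"
proof -
  have cong: "\<And>u u' v v'. \<forall>q\<in>D. u q = u' q \<and> v q = v' q \<Longrightarrow> S u v = S u' v'"
    using S unfolding sym_psd_form_def by blast
  have "S u v = S (\<lambda>q. \<Sum>p\<in>D. u p * of_bool (q = p)) v"
    using D by (intro cong) simp
  also have "\<dots> = (\<Sum>p\<in>D. u p * S (\<lambda>q. of_bool (q = p)) v)"
    by (rule sym_psd_form_sum_left[OF S D])
  finally show ?thesis .
qed

lemma sym_psd_form_expand:
  assumes S: "sym_psd_form D S" and D: "finite D"
  shows "S u v = (\<Sum>p\<in>D. \<Sum>q\<in>D. u p * v q * S (\<lambda>r. of_bool (r = p)) (\<lambda>r. of_bool (r = q)))"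
proof -
  have sym: "\<And>a b. S a b = S b a" using S unfolding sym_psd_form_def by blast
  have "S u v = (\<Sum>p\<in>D. u p * S (\<lambda>r. of_bool (r = p)) v)"
    by (rule sym_psd_form_expand_left[OF S D])
  also have "\<dots> = (\<Sum>p\<in>D. u p * (\<Sum>q\<in>D. v q * S (\<lambda>r. of_bool (r = p)) (\<lambda>r. of_bool (r = q))))"
    by (subst (1 2) sym, subst sym_psd_form_expand_left[OF S D]) (rule refl)
  also have "\<dots> = (\<Sum>p\<in>D. \<Sum>q\<in>D. u p * v q * S (\<lambda>r. of_bool (r = p)) (\<lambda>r. of_bool (r = q)))"
    by (simp add: sum_distrib_left mult.assoc)
  finally show ?thesis .
qed

lemma sym_psd_form_has_real_derivative:
  assumes S: "sym_psd_form D S" and D: "finite D"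
    and u': "\<forall>p\<in>D. ((\<lambda>r. u r p) has_real_derivative u' p) (at t)"
  shows "((\<lambda>r. S (u r) (u r)) has_real_derivative 2 * S u' (u t)) (at t)"
proof -
  define e where "e p = (\<lambda>r::'a. of_bool (r = p) :: real)" for p
  have sym: "\<And>a b. S a b = S b a" using S unfolding sym_psd_form_def by blast
  note expand = sym_psd_form_expand[OF S D, folded e_def]
  have "((\<lambda>r. \<Sum>p\<in>D. \<Sum>q\<in>D. u r p * u r q * S (e p) (e q)) has_real_derivative
      (\<Sum>p\<in>D. \<Sum>q\<in>D. (u' p * u t q + u t p * u' q) * S (e p) (e q))) (at t)"
    using u' by (intro DERIV_sum DERIV_cmult_right DERIV_mult[THEN DERIV_cong]) auto
  moreover have "(\<Sum>p\<in>D. \<Sum>q\<in>D. (u' p * u t q + u t p * u' q) * S (e p) (e q))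
      = S u' (u t) + S (u t) u'"
    unfolding expand[of u' "u t"] expand[of "u t" u']
    by (simp add: algebra_simps sum.distrib)
  ultimately show ?thesis
    using sym[of "u t" u'] by (simp add: expand[symmetric])
qed

lemma has_real_derivative_weighted_square:
  assumes "(x has_real_derivative x') (at t)"
  shows "((\<lambda>s. w * x s * (r * x s)) has_real_derivative 2 * (w * x t * (r * x'))) (at t)"
  by (rule DERIV_cong[OF DERIV_mult[OF DERIV_cmult[OF assms] DERIV_cmult[OF assms]]])
    (simp add: algebra_simps)

lemma ip_fine_kinetic_has_real_derivative:
  assumes "\<forall>p\<in>fine_pts n. ((\<lambda>s. x s p) has_real_derivative x' p) (at t)"
  shows "((\<lambda>s. ip_fine n w (x s) (\<lambda>p. rho p * x s p)) has_real_derivative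
           2 * ip_fine n w (x t) (\<lambda>p. rho p * x' p)) (at t)"
proof -
  have "((\<lambda>s. ip_fine n w (x s) (\<lambda>p. rho p * x s p)) has_real_derivative
      (hh n)^2 * (\<Sum>i=1..2*n. \<Sum>j=1..2*n+1. 2 * (w j * x t (i,j) * (rho (i,j) * x' (i,j))))) (at t)"
    unfolding ip_fine_def using assms
    by (intro DERIV_cmult DERIV_sum has_real_derivative_weighted_square) (auto simp: fine_pts_def)
  then show ?thesis
    by (simp add: ip_fine_def sum_distrib_left mult.left_commute del: sum.cl_ivl_Suc)
qed

lemma ip_coarse_kinetic_has_real_derivative:
  assumes "\<forall>p\<in>coarse_pts n. ((\<lambda>s. x s p) has_real_derivative x' p) (at t)"
  shows "((\<lambda>s. ip_coarse n w (x s) (\<lambda>p. rho p * x s p)) has_real_derivative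
           2 * ip_coarse n w (x t) (\<lambda>p. rho p * x' p)) (at t)"
proof -
  have "((\<lambda>s. ip_coarse n w (x s) (\<lambda>p. rho p * x s p)) has_real_derivative
      (2 * hh n)^2 * (\<Sum>i=1..n. \<Sum>j=0..n. 2 * (w j * x t (i,j) * (rho (i,j) * x' (i,j))))) (at t)"
    unfolding ip_coarse_def using assms
    by (intro DERIV_cmult DERIV_sum has_real_derivative_weighted_square) (auto simp: coarse_pts_def)
  then show ?thesis
    by (simp add: ip_coarse_def sum_distrib_left mult.left_commute del: sum.cl_ivl_Suc)
qed

lemma ip_coarse_cong:
  assumes "\<forall>p\<in>coarse_pts n. v p = v' p"
  shows "ip_coarse n w u v = ip_coarse n w u v'"
  using assms unfolding ip_coarse_def coarse_pts_def by (intro arg_cong2[where f = "(*)"] sum.cong) auto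

lemma ip_fine_interface_forcing:
  assumes "\<forall>i\<in>{1..2*n}. v' (i,1) = v (i,1) + e i"
    and "\<forall>i\<in>{1..2*n}. \<forall>j\<in>{2..2*n+1}. v' (i,j) = v (i,j)"
  shows "ip_fine n w u v' = ip_fine n w u v + bip_fine n (row u 1) (\<lambda>i. hh n * w 1 * e i)"
proof -
  have split_first: "(\<Sum>j=1..2*n+1. F j) = F 1 + (\<Sum>j=2..2*n+1. F j)" for F :: "nat \<Rightarrow> real"
    by (subst sum.atLeast_Suc_atMost) (auto simp: numeral_2_eq_2)
  have "(\<Sum>j=1..2*n+1. w j * u (i,j) * v' (i,j))
      = (\<Sum>j=1..2*n+1. w j * u (i,j) * v (i,j)) + w 1 * u (i,1) * e i"
    if i: "i \<in> {1..2*n}" for i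
    unfolding split_first using assms i by (simp add: algebra_simps)
  then show ?thesis
    unfolding ip_fine_def bip_fine_def row_def
    by (simp add: sum.distrib sum_distrib_left algebra_simps power2_eq_square)
qed

lemma bip_fine_prolong_eq_bip_coarse_restr:
  assumes "\<forall>i\<in>{1..2*n}. \<forall>k\<in>{1..n}. Pm (i,k) = 2 * Rm (k,i)"
  shows "bip_fine n (prolong n Pm a) b = bip_coarse n a (restr n Rm b)"
proof -
  have "(\<Sum>i=1..2*n. prolong n Pm a i * b i) = (\<Sum>i=1..2*n. \<Sum>k=1..n. Pm (i,k) * a k * b i)"
    unfolding prolong_def by (simp add: sum_distrib_right)
  also have "\<dots> = (\<Sum>i=1..2*n. \<Sum>k=1..n. 2 * (a k * (Rm (k,i) * b i)))"
    using assms by (intro sum.cong) (auto simp: algebra_simps)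
  also have "\<dots> = 2 * (\<Sum>k=1..n. a k * restr n Rm b k)"
    by (subst sum.swap) (simp add: restr_def sum_distrib_left)
  finally show ?thesis
    unfolding bip_fine_def bip_coarse_def by simp
qed

lemma bip_coarse_restr_flux:
  assumes "\<forall>i\<in>{1..2*n}. \<forall>k\<in>{1..n}. Pm (i,k) = 2 * Rm (k,i)"
    and "\<forall>i\<in>{1..2*n}. x i = prolong n Pm a i"
    and "\<forall>k\<in>{1..n}. b k = restr n Rm g k"
  shows "bip_coarse n a b = bip_fine n x g"
proof -
  have "bip_coarse n a b = bip_coarse n a (restr n Rm g)"
    using assms(3) unfolding bip_coarse_def by simp
  also have "\<dots> = bip_fine n (prolong n Pm a) g"
    by (rule bip_fine_prolong_eq_bip_coarse_restr[OF assms(1), symmetric])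
  also have "\<dots> = bip_fine n x g"
    using assms(2) unfolding bip_fine_def by simp
  finally show ?thesis .
qed

lemma prolong_has_real_derivative:
  assumes "\<forall>k\<in>{1..n}. ((\<lambda>s. a s k) has_real_derivative a' k) (at t)"
  shows "((\<lambda>s. prolong n Pm (a s) i) has_real_derivative prolong n Pm a' i) (at t)"
  unfolding prolong_def using assms by (intro DERIV_sum DERIV_cmult) auto

lemma has_real_derivative_prolong_unique:
  assumes "\<forall>s. x s = prolong n Pm (a s) i"
    and "(x has_real_derivative x') (at t)"
    and "\<forall>k\<in>{1..n}. ((\<lambda>s. a s k) has_real_derivative a' k) (at t)"
  shows "x' = prolong n Pm a' i"
proof -
  have "x = (\<lambda>s. prolong n Pm (a s) i)" using assms(1) by auto
  then show ?thesis
    using assms(2) prolong_has_real_derivative[OF assms(3)] by (metis DERIV_unique)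
qed

lemma grid_energy_has_real_derivative:
  fixes wf wc :: "nat \<Rightarrow> real"
  assumes Sf: "sym_psd_form (fine_pts n) Sf" and Sc: "sym_psd_form (coarse_pts n) Sc"
    and "\<forall>p\<in>fine_pts n. ((\<lambda>s. f s p) has_real_derivative fd t p) (at t)"
    and "\<forall>p\<in>fine_pts n. ((\<lambda>s. fd s p) has_real_derivative fdd p) (at t)"
    and "\<forall>p\<in>coarse_pts n. ((\<lambda>s. c s p) has_real_derivative cd t p) (at t)"
    and "\<forall>p\<in>coarse_pts n. ((\<lambda>s. cd s p) has_real_derivative cdd p) (at t)"
  shows "((\<lambda>s. ip_fine n wf (fd s) (\<lambda>p. rhof p * fd s p) + Sf (f s) (f s)
              + ip_coarse n wc (cd s) (\<lambda>p. rhoc p * cd s p) + Sc (c s) (c s))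
          has_real_derivative 2 * (ip_fine n wf (fd t) (\<lambda>p. rhof p * fdd p) + Sf (fd t) (f t)
              + ip_coarse n wc (cd t) (\<lambda>p. rhoc p * cdd p) + Sc (cd t) (c t))) (at t)"
proof -
  have fin: "finite (fine_pts n)" "finite (coarse_pts n)"
    unfolding fine_pts_def coarse_pts_def by simp_all
  have "((\<lambda>s. ip_fine n wf (fd s) (\<lambda>p. rhof p * fd s p) + Sf (f s) (f s)
              + ip_coarse n wc (cd s) (\<lambda>p. rhoc p * cd s p) + Sc (c s) (c s))
          has_real_derivative 2 * ip_fine n wf (fd t) (\<lambda>p. rhof p * fdd p) + 2 * Sf (fd t) (f t)
              + 2 * ip_coarse n wc (cd t) (\<lambda>p. rhoc p * cdd p) + 2 * Sc (cd t) (c t)) (at t)"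
    by (intro DERIV_add ip_fine_kinetic_has_real_derivative ip_coarse_kinetic_has_real_derivative
        sym_psd_form_has_real_derivative[OF Sf fin(1)] sym_psd_form_has_real_derivative[OF Sc fin(2)])
      (use assms in blast)+
  then show ?thesis
    by (simp only: distrib_left)
qed

theorem mainTheorem2:
  fixes n :: nat
    and wf wc :: "nat \<Rightarrow> real"
    and Gf :: "gridfun \<Rightarrow> gridfun" and fprime :: "gridfun \<Rightarrow> nat \<Rightarrow> real"
    and Gc :: "gridfun \<Rightarrow> gridfun" and cprime :: "gridfun \<Rightarrow> nat \<Rightarrow> real"
    and Sf Sc :: "gridfun \<Rightarrow> gridfun \<Rightarrow> real"
    and rhof rhoc :: gridfun
    and Pm Rm :: "nat \<times> nat \<Rightarrow> real"
    and f fd fdd c cd cdd :: "real \<Rightarrow> gridfun"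
    and t :: real
  assumes n: "n \<ge> 1"
    and wf_pos: "\<forall>j\<in>{1..2*n+1}. wf j > 0"
    and wc_pos: "\<forall>j\<in>{0..n}. wc j > 0"
    and Gf_lin: "linear_on (fine_pts n) (fine_pts n) Gf"
    and fprime_lin: "linear_on (fine_pts n) {1..2*n} fprime"
    and Gc_lin: "linear_on (coarse_ghost_pts n) (coarse_pts n) Gc"
    and cprime_lin: "linear_on (coarse_ghost_pts n) {1..n} cprime"
    and Sf_form: "sym_psd_form (fine_pts n) Sf"
    and Sc_form: "sym_psd_form (coarse_pts n) Sc"
    and SBP_f: "\<forall>u v. ip_fine n wf u (Gf v) = - Sf u v - bip_fine n (row u 1) (fprime v)"
    and SBP_c: "\<forall>u v. ip_coarse n wc u (Gc v) = - Sc u v + bip_coarse n (row u n) (cprime v)"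
    and rhof_pos: "\<forall>p\<in>fine_pts n. rhof p > 0"
    and rhoc_pos: "\<forall>p\<in>coarse_pts n. rhoc p > 0"
    and P_R: "\<forall>i\<in>{1..2*n}. \<forall>k\<in>{1..n}. Pm (i,k) = 2 * Rm (k,i)"
    and f_d: "\<forall>s. \<forall>p\<in>fine_pts n. ((\<lambda>r. f r p) has_real_derivative fd s p) (at s)"
    and f_dd: "\<forall>s. \<forall>p\<in>fine_pts n. ((\<lambda>r. fd r p) has_real_derivative fdd s p) (at s)"
    and c_d: "\<forall>s. \<forall>p\<in>coarse_pts n. ((\<lambda>r. c r p) has_real_derivative cd s p) (at s)"
    and c_dd: "\<forall>s. \<forall>p\<in>coarse_pts n. ((\<lambda>r. cd r p) has_real_derivative cdd s p) (at s)"
    and eq_c: "\<forall>s. \<forall>p\<in>coarse_pts n. rhoc p * cdd s p = Gc (c s) p"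
    and eq_interface: "\<forall>s. \<forall>i\<in>{1..2*n}. f s (i,1) = prolong n Pm (row (c s) n) i"
    and eq_f1: "\<forall>s. \<forall>i\<in>{1..2*n}. rhof (i,1) * fdd s (i,1) = Gf (f s) (i,1)
                  + (rhof (i,1) * prolong n Pm (\<lambda>k. Gc (c s) (k,n) / rhoc (k,n)) i - Gf (f s) (i,1))"
    and eq_f: "\<forall>s. \<forall>i\<in>{1..2*n}. \<forall>j\<in>{2..2*n+1}. rhof (i,j) * fdd s (i,j) = Gf (f s) (i,j)"
    and eq_flux: "\<forall>s. \<forall>k\<in>{1..n}. cprime (c s) k = restr n Rm (\<lambda>i. fprime (f s) i
                  - hh n * wf 1 * (rhof (i,1) * prolong n Pm (\<lambda>k. Gc (c s) (k,n) / rhoc (k,n)) i - Gf (f s) (i,1))) k"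
  shows "((\<lambda>s. ip_fine n wf (fd s) (\<lambda>p. rhof p * fd s p) + Sf (f s) (f s)
              + ip_coarse n wc (cd s) (\<lambda>p. rhoc p * cd s p) + Sc (c s) (c s))
          has_real_derivative 0) (at t)"
proof -
  define eta where "eta i = rhof (i,1) * prolong n Pm (\<lambda>k. Gc (c t) (k,n) / rhoc (k,n)) i - Gf (f t) (i,1)" for i
  define forcing where "forcing = bip_fine n (row (fd t) 1) (\<lambda>i. hh n * wf 1 * eta i)"
  have fine_rate: "ip_fine n wf (fd t) (\<lambda>p. rhof p * fdd t p)
      = - Sf (fd t) (f t) - bip_fine n (row (fd t) 1) (fprime (f t)) + forcing"
    using ip_fine_interface_forcing[of n "\<lambda>p. rhof p * fdd t p" "Gf (f t)" eta] eq_f1 eq_f SBP_f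
    unfolding eta_def forcing_def by simp
  have interface_velocity: "fd t (i,1) = prolong n Pm (row (cd t) n) i" if "i \<in> {1..2*n}" for i
    by (rule has_real_derivative_prolong_unique
        [where x = "\<lambda>s. f s (i,1)" and a = "\<lambda>s. row (c s) n" and t = t])
      (use that eq_interface in blast, use that f_d in \<open>simp add: fine_pts_def\<close>,
       use c_d in \<open>simp add: coarse_pts_def row_def\<close>)
  have "bip_coarse n (row (cd t) n) (cprime (c t))
      = bip_fine n (row (fd t) 1) (\<lambda>i. fprime (f t) i - hh n * wf 1 * eta i)"
    using eq_flux interface_velocity unfolding eta_def row_def
    by (intro bip_coarse_restr_flux[OF P_R]) auto
  also have "\<dots> = bip_fine n (row (fd t) 1) (fprime (f t)) - forcing"
    unfolding forcing_def bip_fine_def by (simp add: sum_subtractf right_diff_distrib)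
  finally have coarse_rate: "ip_coarse n wc (cd t) (\<lambda>p. rhoc p * cdd t p)
      = - Sc (cd t) (c t) + bip_fine n (row (fd t) 1) (fprime (f t)) - forcing"
    using ip_coarse_cong[of n "\<lambda>p. rhoc p * cdd t p" "Gc (c t)"] eq_c SBP_c by simp
  show ?thesis
    using grid_energy_has_real_derivative
        [OF Sf_form Sc_form, of f fd t "fdd t" c cd "cdd t" wf rhof wc rhoc] f_d f_dd c_d c_dd
    by (simp add: fine_rate coarse_rate)
qed

end
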